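(* A paratopological group $G$ with identity $e$ is dense-connected if and only if $UV^{-1}=G$ for all open neighborhoods $U$ and $V$ of $e$.
   Context: A paratopological group is a group with a topology for which multiplication $G\times G\to G$ is jointly continuous (inversion need not be continuous; no separation axioms assumed). A space is dense-connected if every dense subset of it (with the subspace topology) is connected. *)

theory Defs
  imports "HOL-Analysis.Analysis" "HOL-Algebra.Group"
begin

definition paratopological_group :: "('a, 'b) monoid_scheme \<Rightarrow> 'a topology \<Rightarrow> bool" where
  "paratopological_group G T \<longleftrightarrow>
     group G \<and> topspace T = carrier G \<and>
     continuous_map (prod_topology T T) T (\<lambda>(x, y). x \<otimes>\<^bsub>G\<^esub> y)"

definition dense_connected :: "'a topology \<Rightarrow> bool" where
  "dense_connected T \<longleftrightarrow>
     (\<forall>D. D \<subseteq> topspace T \<and> T closure_of D = topspace T \<longrightarrow> connectedin T D)"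

end

theory Submission
  imports Defs
begin

text \<open>A space is dense-connected exactly when it is hyperconnected: any two nonempty open
sets meet. In a paratopological group left translations are continuous, so the open set
\<open>U\<close> meets the open neighbourhood \<open>gV\<close> of \<open>g\<close> iff \<open>g \<in> UV\<inverse>\<close>; translating arbitrary
nonempty open sets \<open>A \<ni> a\<close> and \<open>B \<ni> b\<close> back to the identity, \<open>a\<inverse>b \<in> (a\<inverse>A)(b\<inverse>B)\<inverse>\<close>
says precisely that \<open>A\<close> and \<open>B\<close> meet.\<close>

definition hyperconnected_space :: "'a topology \<Rightarrow> bool" where
  "hyperconnected_space T \<longleftrightarrow>
     (\<forall>A B. openin T A \<and> openin T B \<and> A \<noteq> {} \<and> B \<noteq> {} \<longrightarrow> A \<inter> B \<noteq> {})"

lemma hyperconnected_space_imp_dense_connected: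
  assumes "hyperconnected_space T"
  shows "dense_connected T"
  unfolding dense_connected_def
proof (intro allI impI)
  fix D assume D: "D \<subseteq> topspace T \<and> T closure_of D = topspace T"
  show "connectedin T D"
    unfolding connectedin
  proof (intro conjI notI)
    assume "\<exists>E1 E2. openin T E1 \<and> openin T E2 \<and> D \<subseteq> E1 \<union> E2 \<and> E1 \<inter> E2 \<inter> D = {}
                    \<and> E1 \<inter> D \<noteq> {} \<and> E2 \<inter> D \<noteq> {}"
    then obtain E1 E2 where E: "openin T E1" "openin T E2" "E1 \<inter> E2 \<inter> D = {}"
      and "E1 \<inter> D \<noteq> {}" "E2 \<inter> D \<noteq> {}"
      by blast
    then have "E1 \<noteq> {}" "E2 \<noteq> {}"
      by blast+
    with E(1,2) assms have "E1 \<inter> E2 \<noteq> {}"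
      unfolding hyperconnected_space_def by blast
    moreover have "openin T (E1 \<inter> E2)"
      using E(1,2) by (rule openin_Int)
    ultimately have "D \<inter> (E1 \<inter> E2) \<noteq> {}"
      using D dense_intersects_open by blast
    with E(3) show False
      by blast
  qed (use D in blast)
qed

lemma dense_connected_imp_hyperconnected_space:
  assumes "dense_connected T"
  shows "hyperconnected_space T"
  unfolding hyperconnected_space_def
proof (intro allI impI)
  fix A B assume AB: "openin T A \<and> openin T B \<and> A \<noteq> {} \<and> B \<noteq> {}"
  \<comment> \<open>\<open>A \<union> C\<close> is dense and split by the disjoint open sets \<open>A\<close> and \<open>C\<close>, so \<open>C = {}\<close>.\<close>
  define C where "C = topspace T - T closure_of A"
  have A_top: "A \<subseteq> topspace T"
    using AB openin_subset by blast
  then have A_sub: "A \<subseteq> T closure_of A"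
    by (rule closure_of_subset)
  have C_top: "C \<subseteq> topspace T" and C_open: "openin T C"
    unfolding C_def by (auto simp: openin_diff)
  have "topspace T \<subseteq> T closure_of A \<union> T closure_of C"
    using closure_of_subset[OF C_top] unfolding C_def by blast
  then have "T closure_of (A \<union> C) = topspace T"
    using closure_of_subset_topspace[of T "A \<union> C"] by auto
  with A_top C_top have "connectedin T (A \<union> C)"
    using assms unfolding dense_connected_def by blast
  moreover have "A \<inter> C = {}"
    using A_sub unfolding C_def by blast
  ultimately have "C = {}"
    using AB C_open unfolding connectedin by blast
  then have "T closure_of A = topspace T"
    using closure_of_subset_topspace[of T A] unfolding C_def by blast
  then show "A \<inter> B \<noteq> {}"
    using AB dense_intersects_open by blast
qed

lemma dense_connected_iff_hyperconnected_space:
  "dense_connected T \<longleftrightarrow> hyperconnected_space T"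
  using dense_connected_imp_hyperconnected_space hyperconnected_space_imp_dense_connected
  by blast

lemma paratopological_group_openin_left_translation_preimage:
  assumes P: "paratopological_group G T" and g: "g \<in> carrier G" and V: "openin T V"
  shows "openin T {x \<in> carrier G. g \<otimes>\<^bsub>G\<^esub> x \<in> V}"
proof -
  have ts: "topspace T = carrier G"
    and mult: "continuous_map (prod_topology T T) T (\<lambda>(x, y). x \<otimes>\<^bsub>G\<^esub> y)"
    using P unfolding paratopological_group_def by auto
  have "continuous_map T (prod_topology T T) (\<lambda>x. (g, x))"
    by (intro continuous_map_pairedI) (auto simp: ts g)
  then have "continuous_map T T ((\<lambda>(x, y). x \<otimes>\<^bsub>G\<^esub> y) \<circ> (\<lambda>x. (g, x)))"
    using mult continuous_map_compose by blast
  then have "continuous_map T T (\<lambda>x. g \<otimes>\<^bsub>G\<^esub> x)"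
    by (simp add: o_def)
  from openin_continuous_map_preimage[OF this V] show ?thesis
    by (simp add: ts)
qed

lemma (in group) hyperconnected_space_imp_mult_inv_eq_carrier:
  assumes P: "paratopological_group G T" and hyp: "hyperconnected_space T"
    and U: "openin T U" "\<one> \<in> U" and V: "openin T V" "\<one> \<in> V"
  shows "{u \<otimes> inv v | u v. u \<in> U \<and> v \<in> V} = carrier G"
proof
  have "U \<subseteq> carrier G" "V \<subseteq> carrier G"
    using P U V openin_subset unfolding paratopological_group_def by blast+
  then show "{u \<otimes> inv v | u v. u \<in> U \<and> v \<in> V} \<subseteq> carrier G"
    by auto
next
  show "carrier G \<subseteq> {u \<otimes> inv v | u v. u \<in> U \<and> v \<in> V}"
  proof
    fix g assume g: "g \<in> carrier G"
    let ?gV = "{x \<in> carrier G. inv g \<otimes> x \<in> V}"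
    have "openin T ?gV"
      using paratopological_group_openin_left_translation_preimage[OF P _ V(1)] g by simp
    moreover have "g \<in> ?gV"
      using g V by simp
    ultimately obtain u where u: "u \<in> U" "u \<in> carrier G" "inv g \<otimes> u \<in> V"
      using hyp U unfolding hyperconnected_space_def by blast
    have "g = u \<otimes> inv (inv g \<otimes> u)"
      using g u by (simp add: inv_mult_group m_assoc[symmetric])
    with u show "g \<in> {u \<otimes> inv v | u v. u \<in> U \<and> v \<in> V}"
      by blast
  qed
qed

lemma (in group) mult_inv_eq_carrier_imp_hyperconnected_space:
  assumes P: "paratopological_group G T"
    and nbhds: "\<And>U V. \<lbrakk>openin T U; \<one> \<in> U; openin T V; \<one> \<in> V\<rbrakk> \<Longrightarrow>
                  {u \<otimes> inv v | u v. u \<in> U \<and> v \<in> V} = carrier G"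
  shows "hyperconnected_space T"
  unfolding hyperconnected_space_def
proof (intro allI impI)
  fix A B assume AB: "openin T A \<and> openin T B \<and> A \<noteq> {} \<and> B \<noteq> {}"
  then obtain a b where ab: "a \<in> A" "b \<in> B"
    by blast
  have a: "a \<in> carrier G" and b: "b \<in> carrier G"
    using P AB ab openin_subset unfolding paratopological_group_def by blast+
  let ?U = "{x \<in> carrier G. a \<otimes> x \<in> A}" and ?V = "{x \<in> carrier G. b \<otimes> x \<in> B}"
  have "openin T ?U" "openin T ?V"
    using paratopological_group_openin_left_translation_preimage[OF P] AB a b by auto
  moreover have "\<one> \<in> ?U" "\<one> \<in> ?V"
    using a b ab by simp_all
  ultimately have "{u \<otimes> inv v | u v. u \<in> ?U \<and> v \<in> ?V} = carrier G"
    by (intro nbhds)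
  moreover have "inv a \<otimes> b \<in> carrier G"
    using a b by simp
  ultimately obtain u v where uv: "u \<in> ?U" "v \<in> ?V" "inv a \<otimes> b = u \<otimes> inv v"
    by blast
  then have "a \<otimes> u = a \<otimes> (u \<otimes> inv v \<otimes> v)"
    by (simp add: m_assoc)
  also have "\<dots> = a \<otimes> (inv a \<otimes> b \<otimes> v)"
    by (simp only: uv(3))
  also have "\<dots> = b \<otimes> v"
    using a b uv(1,2) by (simp add: m_assoc[symmetric])
  finally show "A \<inter> B \<noteq> {}"
    using uv by auto
qed

theorem theorem4p9:
  fixes G :: "('a, 'b) monoid_scheme" and T :: "'a topology"
  assumes "paratopological_group G T"
  shows "dense_connected T \<longleftrightarrow>
    (\<forall>U V. openin T U \<and> \<one>\<^bsub>G\<^esub> \<in> U \<and> openin T V \<and> \<one>\<^bsub>G\<^esub> \<in> V \<longrightarrow>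
       {u \<otimes>\<^bsub>G\<^esub> inv\<^bsub>G\<^esub> v | u v. u \<in> U \<and> v \<in> V} = carrier G)"
proof -
  interpret group G
    using assms unfolding paratopological_group_def by blast
  show ?thesis
    unfolding dense_connected_iff_hyperconnected_space
  proof (intro iffI allI impI; (elim conjE)?)
    fix U V
    assume "hyperconnected_space T"
      and "openin T U" "\<one>\<^bsub>G\<^esub> \<in> U" "openin T V" "\<one>\<^bsub>G\<^esub> \<in> V"
    then show "{u \<otimes>\<^bsub>G\<^esub> inv\<^bsub>G\<^esub> v | u v. u \<in> U \<and> v \<in> V} = carrier G"
      by (rule hyperconnected_space_imp_mult_inv_eq_carrier[OF assms])
  next
    assume nbhds: "\<forall>U V. openin T U \<and> \<one>\<^bsub>G\<^esub> \<in> U \<and> openin T V \<and> \<one>\<^bsub>G\<^esub> \<in> V \<longrightarrow>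
              {u \<otimes>\<^bsub>G\<^esub> inv\<^bsub>G\<^esub> v | u v. u \<in> U \<and> v \<in> V} = carrier G"
    show "hyperconnected_space T"
      by (rule mult_inv_eq_carrier_imp_hyperconnected_space[OF assms]) (rule nbhds[rule_format], simp)
  qed
qed

end
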